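(* Consider the control-affine system described in the context, with safe set $\mathcal{C}=\{x\in\mathbb{R}^{m+n}: h(x)\geq 0\}$. Suppose that: (i) Assumptions A, B and C (see context) hold; (ii) there exist positive constants $\gamma,\epsilon_1,\epsilon_2>0$ and $\gamma^\theta_i,\gamma^\lambda_i>0$, $i\in[n]$, such that for every $x\in\mathcal{C}$ the set $$K_{BF}(x)=\{\mathfrak{u}\in\mathbb{R}^n : \Psi_0(x)+\Psi_1(x)\mathfrak{u}\geq 0\}$$ is non-empty, where $$\Psi_0(x)=\mathcal{M}(x)+\sum_{i=1}^n h_{x_2,i}(x)\,\theta_i^{0\top}\varphi_i(x)-n(\epsilon_1+\epsilon_2)+\gamma\Big[h(x)-\sum_{i=1}^n\Big(\frac{\bar\mu_i^2}{2\gamma_i^\theta}+\frac{\bar\nu_i^2}{2\gamma_i^\lambda}\Big)\Big],$$ $$\Psi_1(x)=\big[h_{x_2,1}^2(g_1+\lambda_1^{0\top}\psi_1),\ h_{x_2,2}^2(g_2+\lambda_2^{0\top}\psi_2),\ \dots,\ h_{x_2,n}^2(g_n+\lambda_n^{0\top}\psi_n)\big]\in\mathbb{R}^{1\times n}$$ (all functions evaluated at $x$); (iii) for each $i\in[n]$, the scalar estimates $\hat\mu_i,\hat\nu_i$ evolve according to $$\dot{\hat\mu}_i=-\gamma\hat\mu_i+\gamma_i^\theta|h_{x_2,i}|\,\|\varphi_i\|,\qquad \dot{\hat\nu}_i=-\gamma\hat\nu_i+\gamma_i^\lambda h_{x_2,i}^2|u_{0,i}|\,\|\psi_i\|,$$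 with $\hat\mu_i(0)>0$, $\hat\nu_i(0)>0$, where $u_0=[u_{0,1},\dots,u_{0,n}]^\top$ is a Lipschitz function satisfying $u_0\in K_{BF}(x)$; (iv) $h(x(0))\geq \sum_{i=1}^n\Big(\frac{\hat\mu_i(0)^2+\bar\mu_i^2}{2\gamma_i^\theta}+\frac{\hat\nu_i(0)^2+\bar\nu_i^2}{2\gamma_i^\lambda}\Big)$. Then the control input $u=h_{x_2}^\top\odot s(u_0)\in\mathbb{R}^n$, where $s(u_0)=[s_1(u_{0,1}),\dots,s_n(u_{0,n})]^\top$ with $$s_i(u_{0,i})=u_{0,i}+\frac{\kappa_{1,i}}{b_i}+\frac{\kappa_{2,i}^2u_{0,i}^2}{b_i(\kappa_{2,i}|h_{x_2,i}||u_{0,i}|+\epsilon_2)},\quad \kappa_{1,i}=\frac{\hat\mu_i^2\|\varphi_i\|^2}{\hat\mu_i\|\varphi_i\||h_{x_2,i}|+\epsilon_1},\quad \kappa_{2,i}=\hat\nu_i\|\psi_i\||h_{x_2,i}|,$$ ensures $h(x(t))\geq 0$ for all $t>0$ along the closed-loop trajectory.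
   Context: Let $m\ge 0$, $n\ge 1$ be integers, $[n]=\{1,\dots,n\}$. The state is $x=(x_1,x_2)\in\mathbb{R}^{m+n}$, $x_1\in\mathbb{R}^m$, $x_2\in\mathbb{R}^n$, the input $u\in\mathbb{R}^n$, and the system is $$\dot x=f(x)+f_u(x)+\begin{pmatrix}0_m\\ f_\theta(x)\end{pmatrix}+\begin{pmatrix}0_{m\times n}\\ g(x)+g_\lambda(x)\end{pmatrix}u,$$ where $f:\mathbb{R}^{m+n}\to\mathbb{R}^{m+n}$ is a known Lipschitz function, $f_u:\mathbb{R}^{m+n}\to\mathbb{R}^{m+n}$ is an unknown Lipschitz function, $f_\theta(x)=[\theta_1^\top\varphi_1(x),\dots,\theta_n^\top\varphi_n(x)]^\top$, $g(x)=\mathrm{diag}(g_1(x),\dots,g_n(x))$, $g_\lambda(x)=\mathrm{diag}(\lambda_1^\top\psi_1(x),\dots,\lambda_n^\top\psi_n(x))$, with known functions $g_i:\mathbb{R}^{m+n}\to\mathbb{R}$, $\varphi_i:\mathbb{R}^{m+n}\to\mathbb{R}^{p_i}$, $\psi_i:\mathbb{R}^{m+n}\to\mathbb{R}^{q_i}$, and unknown constant parameter vectors $\theta_i\in\mathbb{R}^{p_i}$, $\lambda_i\in\mathbb{R}^{q_i}$. The function $h:\mathbb{R}^{m+n}\to\mathbb{R}$ is continuously differentiable; $h_x=\partial h/\partial x\in\mathbb{R}^{1\times(m+n)}$ and $h_{x_2}=\partial h/\partial x_2\in\mathbb{R}^{1\times n}$ are row vectors with entries $h_{x,j}$, $h_{x_2,i}$.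 Norms are Euclidean; $\odot$ is the entrywise (Hadamard) product; vector inequalities are entrywise. Assumption A: there are known functions $\underline f_u,\overline f_u:\mathbb{R}^{m+n}\to\mathbb{R}^{m+n}$ with $\underline f_u(x)\le f_u(x)\le\overline f_u(x)$ for all $x$; write $\underline f_{u,j},\overline f_{u,j}$ for their entries. Assumption B: for each $i\in[n]$ there are known vectors with $\underline\theta_i\le\theta_i\le\overline\theta_i$ and $\underline\lambda_i\le\lambda_i\le\overline\lambda_i$. Assumption C: for each $i\in[n]$ there is a constant $b_i>0$ such that $g_i(x)+\lambda_i^\top\psi_i(x)\geq b_i$ for all $x\in\mathcal{C}$. Fix nominal values $\theta_i^0,\lambda_i^0$ with $\underline\theta_i\le\theta_i^0\le\overline\theta_i$, $\underline\lambda_i\le\lambda_i^0\le\overline\lambda_i$, and set $\bar\mu_i=\sqrt{\sum_{j=1}^{p_i}\max\{((\overline\theta_i)_j-(\theta_i^0)_j)^2,((\underline\theta_i)_j-(\theta_i^0)_j)^2\}}$, $\bar\nu_i=\sqrt{\sum_{j=1}^{q_i}\max\{((\overline\lambda_i)_j-(\lambda_i^0)_j)^2,((\underline\lambda_i)_j-(\lambda_i^0)_j)^2\}}$ (so that $\|\theta_i-\theta_i^0\|\le\bar\mu_i$, $\|\lambda_i-\lambda_i^0\|\le\bar\nu_i$). Define $\mathcal{M}(x)=h_x(x)f(x)+\sum_{j=1}^{m+n}\min\{h_{x,j}(x)\underline f_{u,j}(x),\,h_{x,j}(x)\overline f_{u,j}(x)\}$. *)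

theory Defs
  imports "HOL-Analysis.Analysis"
begin

text \<open>Variable-length parameter vectors in R^p are represented as functions
  nat => real, of which only the entries 0..p-1 matter.\<close>

definition ip :: "nat \<Rightarrow> (nat \<Rightarrow> real) \<Rightarrow> (nat \<Rightarrow> real) \<Rightarrow> real" where
  "ip p a b = (\<Sum>j<p. a j * b j)"

definition vnorm :: "nat \<Rightarrow> (nat \<Rightarrow> real) \<Rightarrow> real" where
  "vnorm p a = sqrt (\<Sum>j<p. (a j)\<^sup>2)"

definition vle :: "nat \<Rightarrow> (nat \<Rightarrow> real) \<Rightarrow> (nat \<Rightarrow> real) \<Rightarrow> bool" where
  "vle p a b = (\<forall>j<p. a j \<le> b j)"

definition dev_bound :: "nat \<Rightarrow> (nat \<Rightarrow> real) \<Rightarrow> (nat \<Rightarrow> real) \<Rightarrow> (nat \<Rightarrow> real) \<Rightarrow> real" where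
  "dev_bound p lo hi c = sqrt (\<Sum>j<p. max ((hi j - c j)\<^sup>2) ((lo j - c j)\<^sup>2))"

text \<open>The state is x :: real^'d; the x_2 block is given by an injective
  index map e :: 'n => 'd (the remaining m = CARD('d) - CARD('n) coordinates form x_1).
  emb e v is the vector (0_m, v).\<close>
definition emb :: "('n \<Rightarrow> 'd) \<Rightarrow> ('n \<Rightarrow> real) \<Rightarrow> real^'d" where
  "emb e v = (\<chi> j. if j \<in> range e then v (inv e j) else 0)"

end

theory Submission
  imports Defs
begin

(* With the unknown deviations m_i = ||theta_i - theta0_i|| <= mubar_i and n_i = ||lam_i - lam0_i|| <= nubar_i, put
     W = sum_i (mu_i - m_i)^2 / (2 gamma_theta_i) + (nu_i - n_i)^2 / (2 gamma_lam_i)   and   V = h(x) - W.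
   While x(t) lies in C, the kappa-terms of the controller dominate the parameter mismatch up to eps1 + eps2,
   the adaptation laws cancel the remaining cross terms, and u0 in K_BF turns the rest into dV/dt >= -gamma V.
   Hence, up to the first time with h(x(t)) <= 0, h = V + W >= W(t) + exp(-gamma t) V(0); this is strictly
   positive by the initial condition, because the estimates mu_i stay positive, so that time does not exist.
   The Lipschitz and continuity hypotheses and K_BF being nonempty only make the closed loop well posed. *)

lemma vnorm_nonneg: "0 \<le> vnorm p a"
  unfolding vnorm_def by (simp add: sum_nonneg)

lemma abs_ip_diff_le: "\<bar>ip p a c - ip p b c\<bar> \<le> vnorm p (\<lambda>j. a j - b j) * vnorm p c"
proof -
  have "\<bar>ip p a c - ip p b c\<bar> = \<bar>\<Sum>j<p. (a j - b j) * c j\<bar>"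
    unfolding ip_def by (simp add: sum_subtractf left_diff_distrib)
  also have "\<dots> \<le> (\<Sum>j<p. \<bar>a j - b j\<bar> * \<bar>c j\<bar>)"
    by (rule order_trans[OF sum_abs]) (simp add: abs_mult)
  also have "\<dots> \<le> L2_set (\<lambda>j. a j - b j) {..<p} * L2_set c {..<p}"
    by (rule L2_set_mult_ineq)
  finally show ?thesis unfolding vnorm_def L2_set_def by simp
qed

lemma vnorm_diff_le_dev_bound:
  assumes "vle p lo a" "vle p a hi"
  shows "vnorm p (\<lambda>j. a j - c j) \<le> dev_bound p lo hi c"
  unfolding vnorm_def dev_bound_def
proof (intro real_sqrt_le_mono sum_mono)
  fix j assume "j \<in> {..<p}"
  then have "lo j \<le> a j" "a j \<le> hi j" using assms by (auto simp: vle_def)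
  then show "(a j - c j)\<^sup>2 \<le> max ((hi j - c j)\<^sup>2) ((lo j - c j)\<^sup>2)"
  proof (cases "c j \<le> a j")
    case True
    with \<open>a j \<le> hi j\<close> have "(a j - c j)\<^sup>2 \<le> (hi j - c j)\<^sup>2" by (intro power_mono) auto
    then show ?thesis by simp
  next
    case False
    with \<open>lo j \<le> a j\<close> have "(c j - a j)\<^sup>2 \<le> (c j - lo j)\<^sup>2" by (intro power_mono) auto
    then show ?thesis by (simp add: power2_commute)
  qed
qed

lemma inner_emb:
  fixes e :: "'n::finite \<Rightarrow> 'd::finite"
  assumes "inj e"
  shows "D \<bullet> emb e v = (\<Sum>i\<in>UNIV. D $ e i * v i)"
proof -
  have "D \<bullet> emb e v = (\<Sum>j\<in>UNIV. if j \<in> range e then D $ j * v (inv e j) else 0)"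
    unfolding inner_vec_def emb_def by (intro sum.cong) auto
  also have "\<dots> = (\<Sum>j\<in>range e. D $ j * v (inv e j))"
    by (simp add: sum.inter_restrict[symmetric])
  also have "\<dots> = (\<Sum>i\<in>UNIV. D $ e i * v i)"
    using assms by (simp add: sum.reindex)
  finally show ?thesis .
qed

lemma sum_min_le_inner:
  fixes D lo hi v :: "real^'d::finite"
  assumes "\<And>j. lo $ j \<le> v $ j \<and> v $ j \<le> hi $ j"
  shows "(\<Sum>j\<in>UNIV. min (D $ j * lo $ j) (D $ j * hi $ j)) \<le> D \<bullet> v"
  unfolding inner_vec_def inner_real_def
proof (rule sum_mono)
  fix j
  from assms have "lo $ j \<le> v $ j" "v $ j \<le> hi $ j" by auto
  then have "D $ j * lo $ j \<le> D $ j * v $ j \<or> D $ j * hi $ j \<le> D $ j * v $ j"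
    by (cases "0 \<le> D $ j") (auto intro: mult_left_mono mult_left_mono_neg)
  then show "min (D $ j * lo $ j) (D $ j * hi $ j) \<le> D $ j * v $ j" by linarith
qed

lemma lower_bound_by_exp_decay:
  fixes f f' :: "real \<Rightarrow> real"
  assumes f: "\<And>t. 0 \<le> t \<Longrightarrow> (f has_real_derivative f' t) (at t within {0..})"
    and T: "0 \<le> T" and decay: "\<And>t. 0 < t \<Longrightarrow> t < T \<Longrightarrow> 0 \<le> \<gamma> * f t + f' t"
  shows "exp (- \<gamma> * T) * f 0 \<le> f T"
proof -
  define g where "g t = exp (\<gamma> * t) * f t" for t
  have g: "(g has_real_derivative exp (\<gamma> * t) * (\<gamma> * f t + f' t)) (at t within {0..})"
    if "0 \<le> t" for t
    unfolding g_def using f[OF that] by (auto intro!: derivative_eq_intros simp: algebra_simps)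
  have "g 0 \<le> g T"
  proof (rule DERIV_nonneg_imp_increasing_open[OF T])
    fix t assume t: "0 < t" "t < T"
    have "at t within {0..} = at t" using t by (intro at_within_interior) auto
    with g[of t] decay[OF t] t show "\<exists>y. (g has_real_derivative y) (at t) \<and> 0 \<le> y" by auto
  next
    have "continuous_on {0..} g"
      unfolding continuous_on_eq_continuous_within using g by (auto intro: DERIV_continuous)
    then show "continuous_on {0..T} g" by (rule continuous_on_subset) auto
  qed
  then have "f 0 \<le> exp (\<gamma> * T) * f T" by (simp add: g_def)
  then have "exp (- \<gamma> * T) * f 0 \<le> exp (- \<gamma> * T) * (exp (\<gamma> * T) * f T)" by simp
  then show ?thesis by (simp add: exp_minus field_simps)
qed

lemma positive_by_exp_decay:
  fixes f d :: "real \<Rightarrow> real"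
  assumes "\<And>t. 0 \<le> t \<Longrightarrow> (f has_real_derivative - \<gamma> * f t + d t) (at t within {0..})"
    and "\<And>t. 0 \<le> d t" and "0 < f 0" and "0 \<le> T"
  shows "0 < f T"
proof -
  have "0 \<le> \<gamma> * f t + (- \<gamma> * f t + d t)" for t
    using assms(2)[of t] by simp
  with assms(1,4) have "exp (- \<gamma> * T) * f 0 \<le> f T"
    by (rule lower_bound_by_exp_decay)
  moreover have "0 < exp (- \<gamma> * T) * f 0" using assms(3) by simp
  ultimately show ?thesis by linarith
qed

lemma positive_by_comparison:
  fixes H W V' :: "real \<Rightarrow> real" and \<gamma> T :: real
  assumes V: "\<And>t. 0 \<le> t \<Longrightarrow> ((\<lambda>t. H t - W t) has_real_derivative V' t) (at t within {0..})"
    and H: "continuous_on {0..} H"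
    and decay: "\<And>t. 0 \<le> t \<Longrightarrow> 0 < H t \<Longrightarrow> 0 \<le> \<gamma> * (H t - W t) + V' t"
    and margin: "\<And>t. 0 \<le> t \<Longrightarrow> 0 < W t + exp (- \<gamma> * t) * (H 0 - W 0)"
    and T: "0 \<le> T"
  shows "0 < H T"
proof (rule ccontr)
  assume "\<not> 0 < H T"
  define S where "S = {0..T} \<inter> H -` {..0}"
  have "closed S" unfolding S_def
    using H by (intro continuous_closed_preimage) (auto intro: continuous_on_subset)
  moreover have "T \<in> S" "bdd_below S" using \<open>\<not> 0 < H T\<close> T by (auto simp: S_def)
  ultimately have "Inf S \<in> S" by (intro closed_contains_Inf) auto
  then have t0: "0 \<le> Inf S" "H (Inf S) \<le> 0" by (auto simp: S_def)
  have before: "0 < H t" if "0 \<le> t" "t < Inf S" for t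
    using cInf_lower[OF _ \<open>bdd_below S\<close>, of t] that \<open>Inf S \<in> S\<close> by (force simp: S_def)
  have "0 \<le> \<gamma> * (H t - W t) + V' t" if "0 < t" "t < Inf S" for t
    using that by (intro decay before) auto
  from lower_bound_by_exp_decay[OF V t0(1) this]
  have "exp (- \<gamma> * Inf S) * (H 0 - W 0) \<le> H (Inf S) - W (Inf S)" .
  with margin[OF t0(1)] t0(2) show False by linarith
qed

lemma has_real_derivative_gradient_chain:
  fixes h :: "'a::real_inner \<Rightarrow> real"
  assumes "(h has_derivative (\<lambda>v. D \<bullet> v)) (at (x t))"
    and "(x has_vector_derivative x') (at t within S)"
  shows "((\<lambda>t. h (x t)) has_real_derivative D \<bullet> x') (at t within S)"
proof -
  from assms(2) have "((h \<circ> x) has_vector_derivative D \<bullet> x') (at t within S)"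
    by (rule vector_derivative_diff_chain_within) (rule has_derivative_at_withinI[OF assms(1)])
  then show ?thesis by (simp add: has_real_derivative_iff_has_vector_derivative o_def)
qed

lemma diff_le_square_div_add:
  fixes c e :: real
  assumes "0 \<le> c" "0 < e"
  shows "c - e \<le> c\<^sup>2 / (c + e)"
proof -
  have "(c - e) * (c + e) \<le> c\<^sup>2" by (simp add: power2_eq_square algebra_simps)
  with assms show ?thesis by (simp add: field_simps)
qed

text \<open>The controller term \<open>s\<^sub>i(u\<^sub>0\<^sub>i)\<close> of the paper, for \<open>a = h\<^sub>x\<^sub>2\<^sub>i\<close>, \<open>P = \<parallel>\<phi>\<^sub>i\<parallel>\<close>,
  \<open>Q = \<parallel>\<psi>\<^sub>i\<parallel>\<close> and the current estimates \<open>m\<close>, \<open>n\<close> of \<open>\<mu>\<^sub>i\<close>, \<open>\<nu>\<^sub>i\<close>.\<close>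

definition robust_input :: "real \<Rightarrow> real \<Rightarrow> real \<Rightarrow> real \<Rightarrow> real \<Rightarrow> real \<Rightarrow> real \<Rightarrow> real \<Rightarrow> real \<Rightarrow> real"
  where "robust_input a P Q m n b e1 e2 w =
    (let \<kappa>1 = m\<^sup>2 * P\<^sup>2 / (m * P * \<bar>a\<bar> + e1); \<kappa>2 = n * Q * \<bar>a\<bar>
     in w + \<kappa>1 / b + \<kappa>2\<^sup>2 * w\<^sup>2 / (b * (\<kappa>2 * \<bar>a\<bar> * \<bar>w\<bar> + e2)))"

lemma robust_input_bound:
  fixes a tp t0 G G0 w mh nh ms ns P Q e1 e2 b :: real
  assumes P: "0 \<le> P" and Q: "0 \<le> Q" and mh: "0 \<le> mh" and nh: "0 \<le> nh"
    and e1: "0 < e1" and e2: "0 < e2" and b: "0 < b" and G: "b \<le> G"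
    and tp_dev: "\<bar>tp - t0\<bar> \<le> ms * P" and G_dev: "\<bar>G - G0\<bar> \<le> ns * Q"
  shows "a * t0 + a\<^sup>2 * G0 * w - e1 - e2 + (mh - ms) * \<bar>a\<bar> * P + (nh - ns) * a\<^sup>2 * \<bar>w\<bar> * Q
    \<le> a * (tp + G * (a * robust_input a P Q mh nh b e1 e2 w))"
proof -
  define \<kappa>1 where "\<kappa>1 = mh\<^sup>2 * P\<^sup>2 / (mh * P * \<bar>a\<bar> + e1)"
  define \<kappa>2 where "\<kappa>2 = nh * Q * \<bar>a\<bar>"
  define r2 where "r2 = \<kappa>2\<^sup>2 * w\<^sup>2 / (\<kappa>2 * \<bar>a\<bar> * \<bar>w\<bar> + e2)"
  have \<kappa>1: "0 \<le> \<kappa>1" and \<kappa>2: "0 \<le> \<kappa>2" using P Q mh nh e1 by (auto simp: \<kappa>1_def \<kappa>2_def)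
  have r2: "0 \<le> r2" using \<kappa>2 e2 by (simp add: r2_def add_nonneg_pos)
  have "a * tp \<ge> a * t0 - ms * \<bar>a\<bar> * P"
  proof -
    have "\<bar>a * tp - a * t0\<bar> \<le> \<bar>a\<bar> * (ms * P)"
      using tp_dev by (simp add: abs_mult mult_left_mono flip: right_diff_distrib)
    then show ?thesis by (simp add: algebra_simps)
  qed
  moreover have "a\<^sup>2 * G * w \<ge> a\<^sup>2 * G0 * w - ns * Q * a\<^sup>2 * \<bar>w\<bar>"
  proof -
    have "\<bar>a\<^sup>2 * G * w - a\<^sup>2 * G0 * w\<bar> = a\<^sup>2 * \<bar>w\<bar> * \<bar>G - G0\<bar>"
      by (simp add: abs_mult flip: right_diff_distrib left_diff_distrib)
    also have "\<dots> \<le> a\<^sup>2 * \<bar>w\<bar> * (ns * Q)" using G_dev by (intro mult_left_mono) auto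
    finally show ?thesis by (simp add: algebra_simps)
  qed
  moreover have "a\<^sup>2 * \<kappa>1 + a\<^sup>2 * r2 \<le> a\<^sup>2 * G * ((\<kappa>1 + r2) / b)"
  proof -
    have "a\<^sup>2 * \<kappa>1 + a\<^sup>2 * r2 = a\<^sup>2 * b * ((\<kappa>1 + r2) / b)"
      using b by (simp add: field_simps)
    also have "\<dots> \<le> a\<^sup>2 * G * ((\<kappa>1 + r2) / b)"
      using G \<kappa>1 r2 b by (intro mult_right_mono mult_left_mono) auto
    finally show ?thesis .
  qed
  moreover have "a\<^sup>2 * \<kappa>1 \<ge> mh * P * \<bar>a\<bar> - e1"
  proof -
    have "a\<^sup>2 * \<kappa>1 = (mh * P * \<bar>a\<bar>)\<^sup>2 / (mh * P * \<bar>a\<bar> + e1)"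
      by (simp add: \<kappa>1_def power_mult_distrib)
    with diff_le_square_div_add[of "mh * P * \<bar>a\<bar>" e1] mh P e1 show ?thesis by simp
  qed
  moreover have "a\<^sup>2 * r2 \<ge> nh * Q * a\<^sup>2 * \<bar>w\<bar> - e2"
  proof -
    have "\<kappa>2 * \<bar>a\<bar> * \<bar>w\<bar> - e2 \<le> (\<kappa>2 * \<bar>a\<bar> * \<bar>w\<bar>)\<^sup>2 / (\<kappa>2 * \<bar>a\<bar> * \<bar>w\<bar> + e2)"
      using \<kappa>2 e2 by (intro diff_le_square_div_add) auto
    also have "\<dots> = a\<^sup>2 * r2"
      by (simp add: r2_def power_mult_distrib)
    moreover have "\<kappa>2 * \<bar>a\<bar> * \<bar>w\<bar> = nh * Q * a\<^sup>2 * \<bar>w\<bar>"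
      by (simp add: \<kappa>2_def power2_eq_square)
    ultimately show ?thesis by linarith
  qed
  moreover have "a * (tp + G * (a * robust_input a P Q mh nh b e1 e2 w))
    = a * tp + a\<^sup>2 * G * w + a\<^sup>2 * G * ((\<kappa>1 + r2) / b)"
    by (simp add: robust_input_def \<kappa>1_def \<kappa>2_def r2_def power2_eq_square add_divide_distrib algebra_simps)
  ultimately show ?thesis by (simp add: algebra_simps)
qed

lemma square_diff_sub_square_le:
  fixes m c d :: real
  assumes "c\<^sup>2 \<le> d\<^sup>2"
  shows "(m - c)\<^sup>2 - d\<^sup>2 \<le> 2 * (m - c) * m"
proof -
  have "(m - c)\<^sup>2 - d\<^sup>2 = 2 * (m - c) * m - m\<^sup>2 - (d\<^sup>2 - c\<^sup>2)"
    by (simp add: power2_eq_square algebra_simps)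
  with assms show ?thesis using zero_le_power2[of m] by linarith
qed

text \<open>The adaptation laws are designed so that their cross terms cancel the terms
  \<open>(mh - ms) |a| P\<close> and \<open>(nh - ns) a\<^sup>2 |w| Q\<close> of \<open>robust_input_bound\<close>.\<close>

lemma lyapunov_summand_bound:
  fixes a tp t0 G G0 w mh nh ms ns mb nb P Q \<gamma> gt gl e1 e2 b :: real
  assumes P: "0 \<le> P" and Q: "0 \<le> Q" and mh: "0 \<le> mh" and nh: "0 \<le> nh"
    and ms: "0 \<le> ms" "ms \<le> mb" and ns: "0 \<le> ns" "ns \<le> nb"
    and \<gamma>: "0 < \<gamma>" and gt: "0 < gt" and gl: "0 < gl"
    and e1: "0 < e1" and e2: "0 < e2" and b: "0 < b" and G: "b \<le> G"
    and tp_dev: "\<bar>tp - t0\<bar> \<le> ms * P" and G_dev: "\<bar>G - G0\<bar> \<le> ns * Q"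
  shows "a * t0 + a\<^sup>2 * G0 * w - (e1 + e2)
      + \<gamma> * ((mh - ms)\<^sup>2 / (2 * gt) + (nh - ns)\<^sup>2 / (2 * gl))
      - \<gamma> * (mb\<^sup>2 / (2 * gt) + nb\<^sup>2 / (2 * gl))
    \<le> a * (tp + G * (a * robust_input a P Q mh nh b e1 e2 w))
      - ((mh - ms) / gt * (- \<gamma> * mh + gt * \<bar>a\<bar> * P)
         + (nh - ns) / gl * (- \<gamma> * nh + gl * a\<^sup>2 * \<bar>w\<bar> * Q))"
proof -
  have "\<gamma> * ((mh - ms)\<^sup>2 - mb\<^sup>2) \<le> \<gamma> * (2 * (mh - ms) * mh)"
    using ms \<gamma> by (intro mult_left_mono square_diff_sub_square_le power_mono) auto
  moreover have "\<gamma> * ((nh - ns)\<^sup>2 - nb\<^sup>2) \<le> \<gamma> * (2 * (nh - ns) * nh)"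
    using ns \<gamma> by (intro mult_left_mono square_diff_sub_square_le power_mono) auto
  ultimately have "\<gamma> * ((mh - ms)\<^sup>2 - mb\<^sup>2) / (2 * gt) + \<gamma> * ((nh - ns)\<^sup>2 - nb\<^sup>2) / (2 * gl)
    \<le> \<gamma> * (2 * (mh - ms) * mh) / (2 * gt) + \<gamma> * (2 * (nh - ns) * nh) / (2 * gl)"
    using gt gl by (intro add_mono divide_right_mono) auto
  moreover have "\<gamma> * ((mh - ms)\<^sup>2 / (2 * gt) + (nh - ns)\<^sup>2 / (2 * gl))
      - \<gamma> * (mb\<^sup>2 / (2 * gt) + nb\<^sup>2 / (2 * gl))
    = \<gamma> * ((mh - ms)\<^sup>2 - mb\<^sup>2) / (2 * gt) + \<gamma> * ((nh - ns)\<^sup>2 - nb\<^sup>2) / (2 * gl)"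
    by (simp add: diff_divide_distrib algebra_simps)
  moreover have "(mh - ms) / gt * (- \<gamma> * mh + gt * \<bar>a\<bar> * P)
      + (nh - ns) / gl * (- \<gamma> * nh + gl * a\<^sup>2 * \<bar>w\<bar> * Q)
    = (mh - ms) * \<bar>a\<bar> * P + (nh - ns) * a\<^sup>2 * \<bar>w\<bar> * Q
      - (\<gamma> * (2 * (mh - ms) * mh) / (2 * gt) + \<gamma> * (2 * (nh - ns) * nh) / (2 * gl))"
    using gt gl by (simp add: field_simps)
  ultimately show ?thesis
    using robust_input_bound[OF P Q mh nh e1 e2 b G tp_dev G_dev, of a w] by linarith
qed

lemma lyapunov_decay_bound:
  fixes a tp t0 G G0 w mh nh ms ns mb nb P Q gt gl b :: "'n::finite \<Rightarrow> real"
    and \<gamma> e1 e2 H Lf Lf_lb :: real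
  assumes "\<And>i. 0 \<le> P i" "\<And>i. 0 \<le> Q i" "\<And>i. 0 \<le> mh i" "\<And>i. 0 \<le> nh i"
    and "\<And>i. 0 \<le> ms i" "\<And>i. ms i \<le> mb i" "\<And>i. 0 \<le> ns i" "\<And>i. ns i \<le> nb i"
    and "0 < \<gamma>" "\<And>i. 0 < gt i" "\<And>i. 0 < gl i" "0 < e1" "0 < e2"
    and "\<And>i. 0 < b i" "\<And>i. b i \<le> G i"
    and "\<And>i. \<bar>tp i - t0 i\<bar> \<le> ms i * P i" "\<And>i. \<bar>G i - G0 i\<bar> \<le> ns i * Q i"
    and drift: "Lf_lb \<le> Lf"
    and cbf: "0 \<le> Lf_lb + (\<Sum>i\<in>UNIV. a i * t0 i) - real CARD('n) * (e1 + e2)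
      + \<gamma> * (H - (\<Sum>i\<in>UNIV. (mb i)\<^sup>2 / (2 * gt i) + (nb i)\<^sup>2 / (2 * gl i)))
      + (\<Sum>i\<in>UNIV. (a i)\<^sup>2 * G0 i * w i)"
  shows "0 \<le> \<gamma> * (H - (\<Sum>i\<in>UNIV. (mh i - ms i)\<^sup>2 / (2 * gt i) + (nh i - ns i)\<^sup>2 / (2 * gl i)))
    + (Lf + (\<Sum>i\<in>UNIV. a i * (tp i + G i * (a i * robust_input (a i) (P i) (Q i) (mh i) (nh i) (b i) e1 e2 (w i))))
       - (\<Sum>i\<in>UNIV. (mh i - ms i) / gt i * (- \<gamma> * mh i + gt i * \<bar>a i\<bar> * P i)
           + (nh i - ns i) / gl i * (- \<gamma> * nh i + gl i * (a i)\<^sup>2 * \<bar>w i\<bar> * Q i)))"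
proof -
  have "(\<Sum>i\<in>UNIV. a i * t0 i + (a i)\<^sup>2 * G0 i * w i - (e1 + e2)
      + \<gamma> * ((mh i - ms i)\<^sup>2 / (2 * gt i) + (nh i - ns i)\<^sup>2 / (2 * gl i))
      - \<gamma> * ((mb i)\<^sup>2 / (2 * gt i) + (nb i)\<^sup>2 / (2 * gl i)))
    \<le> (\<Sum>i\<in>UNIV. a i * (tp i + G i * (a i * robust_input (a i) (P i) (Q i) (mh i) (nh i) (b i) e1 e2 (w i)))
      - ((mh i - ms i) / gt i * (- \<gamma> * mh i + gt i * \<bar>a i\<bar> * P i)
         + (nh i - ns i) / gl i * (- \<gamma> * nh i + gl i * (a i)\<^sup>2 * \<bar>w i\<bar> * Q i)))"
    using assms by (intro sum_mono lyapunov_summand_bound) auto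
  with drift cbf show ?thesis
    by (simp add: sum.distrib sum_subtractf right_diff_distrib flip: sum_distrib_left)
qed

lemma square_diff_add_pos:
  fixes m c k :: real
  assumes "0 < m" "0 \<le> c" "0 < k"
  shows "0 < (m - c)\<^sup>2 + k * c"
  using assms by (cases "c = 0") (auto intro: add_nonneg_pos)

text \<open>Each summand is positive: if \<open>c i > 0\<close> the margin term is, and otherwise \<open>m i > 0 = c i\<close>.\<close>

lemma error_sum_add_margin_pos:
  fixes m m0 c n d k l :: "'n::finite \<Rightarrow> real" and r :: real
  assumes "\<And>i. 0 < m i" "\<And>i. 0 < m0 i" "\<And>i. 0 \<le> c i" "\<And>i. 0 < k i" "\<And>i. 0 < l i" "0 < r"
  shows "0 < (\<Sum>i\<in>UNIV. (m i - c i)\<^sup>2 / (2 * k i) + (n i - d i)\<^sup>2 / (2 * l i))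
    + r * (\<Sum>i\<in>UNIV. m0 i * c i / k i)"
proof -
  have "0 < (\<Sum>i\<in>UNIV. ((m i - c i)\<^sup>2 + (2 * r * m0 i) * c i) / (2 * k i))"
    using assms by (intro sum_pos divide_pos_pos square_diff_add_pos) auto
  also have "\<dots> \<le> (\<Sum>i\<in>UNIV. (m i - c i)\<^sup>2 / (2 * k i) + (n i - d i)\<^sup>2 / (2 * l i) + r * (m0 i * c i / k i))"
  proof (rule sum_mono)
    fix i
    have "((m i - c i)\<^sup>2 + (2 * r * m0 i) * c i) / (2 * k i) = (m i - c i)\<^sup>2 / (2 * k i) + r * (m0 i * c i / k i)"
      using assms(4)[of i] by (simp add: field_simps)
    moreover have "0 \<le> (n i - d i)\<^sup>2 / (2 * l i)" using assms(5)[of i] by simp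
    ultimately show "((m i - c i)\<^sup>2 + (2 * r * m0 i) * c i) / (2 * k i)
      \<le> (m i - c i)\<^sup>2 / (2 * k i) + (n i - d i)\<^sup>2 / (2 * l i) + r * (m0 i * c i / k i)" by linarith
  qed
  finally show ?thesis by (simp add: sum.distrib sum_distrib_left)
qed

lemma adaptive_margin_pos:
  fixes m n m0 n0 c d cb db k l :: "'n::finite \<Rightarrow> real" and r H0 :: real
  assumes "\<And>i. 0 < m i" "\<And>i. 0 < m0 i" "\<And>i. 0 < n0 i"
    and c: "\<And>i. 0 \<le> c i" "\<And>i. c i \<le> cb i" and d: "\<And>i. 0 \<le> d i" "\<And>i. d i \<le> db i"
    and k: "\<And>i. 0 < k i" and l: "\<And>i. 0 < l i" and "0 < r"
    and H0: "(\<Sum>i\<in>UNIV. ((m0 i)\<^sup>2 + (cb i)\<^sup>2) / (2 * k i) + ((n0 i)\<^sup>2 + (db i)\<^sup>2) / (2 * l i)) \<le> H0"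
  shows "0 < (\<Sum>i\<in>UNIV. (m i - c i)\<^sup>2 / (2 * k i) + (n i - d i)\<^sup>2 / (2 * l i))
    + r * (H0 - (\<Sum>i\<in>UNIV. (m0 i - c i)\<^sup>2 / (2 * k i) + (n0 i - d i)\<^sup>2 / (2 * l i)))"
proof -
  have "m0 i * c i / k i \<le> (((m0 i)\<^sup>2 + (cb i)\<^sup>2) / (2 * k i) + ((n0 i)\<^sup>2 + (db i)\<^sup>2) / (2 * l i))
    - ((m0 i - c i)\<^sup>2 / (2 * k i) + (n0 i - d i)\<^sup>2 / (2 * l i))" for i
  proof -
    have "(c i)\<^sup>2 \<le> (cb i)\<^sup>2" "(d i)\<^sup>2 \<le> (db i)\<^sup>2" using c d by (auto intro: power_mono)
    moreover have "0 \<le> n0 i * d i" using assms(3)[of i] d(1)[of i] by simp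
    ultimately have m0: "2 * (m0 i * c i) \<le> (m0 i)\<^sup>2 + (cb i)\<^sup>2 - (m0 i - c i)\<^sup>2"
      and n0: "0 \<le> (n0 i)\<^sup>2 + (db i)\<^sup>2 - (n0 i - d i)\<^sup>2"
      by (simp_all add: power2_eq_square algebra_simps)
    have "m0 i * c i / k i = 2 * (m0 i * c i) / (2 * k i)" by simp
    also have "\<dots> \<le> ((m0 i)\<^sup>2 + (cb i)\<^sup>2 - (m0 i - c i)\<^sup>2) / (2 * k i)"
      using m0 k[of i] by (intro divide_right_mono) auto
    moreover have "0 \<le> ((n0 i)\<^sup>2 + (db i)\<^sup>2 - (n0 i - d i)\<^sup>2) / (2 * l i)"
      using n0 l[of i] by simp
    ultimately show ?thesis unfolding diff_divide_distrib by linarith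
  qed
  then have "(\<Sum>i\<in>UNIV. m0 i * c i / k i)
    \<le> (\<Sum>i\<in>UNIV. ((m0 i)\<^sup>2 + (cb i)\<^sup>2) / (2 * k i) + ((n0 i)\<^sup>2 + (db i)\<^sup>2) / (2 * l i))
      - (\<Sum>i\<in>UNIV. (m0 i - c i)\<^sup>2 / (2 * k i) + (n0 i - d i)\<^sup>2 / (2 * l i))"
    unfolding sum_subtractf[symmetric] by (rule sum_mono)
  with H0 \<open>0 < r\<close> have "r * (\<Sum>i\<in>UNIV. m0 i * c i / k i)
    \<le> r * (H0 - (\<Sum>i\<in>UNIV. (m0 i - c i)\<^sup>2 / (2 * k i) + (n0 i - d i)\<^sup>2 / (2 * l i)))"
    by (intro mult_left_mono) auto
  moreover have "0 < (\<Sum>i\<in>UNIV. (m i - c i)\<^sup>2 / (2 * k i) + (n i - d i)\<^sup>2 / (2 * l i))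
    + r * (\<Sum>i\<in>UNIV. m0 i * c i / k i)"
    using assms by (intro error_sum_add_margin_pos) auto
  ultimately show ?thesis by linarith
qed

theorem theorem1:
  fixes e :: "'n::finite \<Rightarrow> 'd::finite"
    and f fu fu_lo fu_hi :: "real^'d \<Rightarrow> real^'d"
    and h :: "real^'d \<Rightarrow> real"
    and Dh :: "real^'d \<Rightarrow> real^'d"
    and g :: "'n \<Rightarrow> real^'d \<Rightarrow> real"
    and p q :: "'n \<Rightarrow> nat"
    and \<phi> :: "'n \<Rightarrow> real^'d \<Rightarrow> nat \<Rightarrow> real"
    and \<psi> :: "'n \<Rightarrow> real^'d \<Rightarrow> nat \<Rightarrow> real"
    and \<theta> \<theta>_lo \<theta>_hi \<theta>0 lam lam_lo lam_hi lam0 :: "'n \<Rightarrow> nat \<Rightarrow> real"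
    and b :: "'n \<Rightarrow> real"
    and \<gamma> \<epsilon>1 \<epsilon>2 :: real
    and \<gamma>\<theta> \<gamma>lam :: "'n \<Rightarrow> real"
    and u0 :: "real^'d \<Rightarrow> ('n \<Rightarrow> real)"
    and x :: "real \<Rightarrow> real^'d"
    and \<mu> \<nu> :: "real \<Rightarrow> 'n \<Rightarrow> real"
    and C :: "(real^'d) set"
    and \<mu>bar \<nu>bar :: "'n \<Rightarrow> real"
    and hx2 :: "'n \<Rightarrow> real^'d \<Rightarrow> real"
    and M \<Psi>0 :: "real^'d \<Rightarrow> real"
    and \<Psi>1 :: "real^'d \<Rightarrow> 'n \<Rightarrow> real"
    and K :: "real^'d \<Rightarrow> ('n \<Rightarrow> real) set"
    and s :: "real^'d \<Rightarrow> ('n \<Rightarrow> real) \<Rightarrow> ('n \<Rightarrow> real) \<Rightarrow> ('n \<Rightarrow> real) \<Rightarrow> 'n \<Rightarrow> real"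
    and F :: "real^'d \<Rightarrow> ('n \<Rightarrow> real) \<Rightarrow> real^'d"
  assumes inj_e: "inj e"
    \<comment> \<open>C = safe set\<close>
    and C_def: "C = {y. h y \<ge> 0}"
    \<comment> \<open>h continuously differentiable with gradient Dh, so h_x = Dh^T\<close>
    and h_deriv: "\<And>y. (h has_derivative (\<lambda>v. Dh y \<bullet> v)) (at y)"
    and Dh_cont: "continuous_on UNIV Dh"
    and hx2_def: "hx2 = (\<lambda>i y. Dh y $ e i)"
    \<comment> \<open>Lipschitz f (known), fu (unknown)\<close>
    and f_lip: "\<exists>L. L-lipschitz_on UNIV f"
    and fu_lip: "\<exists>L. L-lipschitz_on UNIV fu"
    \<comment> \<open>Assumption A\<close>
    and A: "\<And>y j. fu_lo y $ j \<le> fu y $ j \<and> fu y $ j \<le> fu_hi y $ j"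
    \<comment> \<open>Assumption B\<close>
    and B\<theta>: "\<And>i. vle (p i) (\<theta>_lo i) (\<theta> i) \<and> vle (p i) (\<theta> i) (\<theta>_hi i)"
    and Blam: "\<And>i. vle (q i) (lam_lo i) (lam i) \<and> vle (q i) (lam i) (lam_hi i)"
    \<comment> \<open>Assumption C\<close>
    and b_pos: "\<And>i. b i > 0"
    and AC: "\<And>i y. y \<in> C \<Longrightarrow> g i y + ip (q i) (lam i) (\<psi> i y) \<ge> b i"
    \<comment> \<open>nominal values\<close>
    and nom\<theta>: "\<And>i. vle (p i) (\<theta>_lo i) (\<theta>0 i) \<and> vle (p i) (\<theta>0 i) (\<theta>_hi i)"
    and nomlam: "\<And>i. vle (q i) (lam_lo i) (lam0 i) \<and> vle (q i) (lam0 i) (lam_hi i)"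
    and \<mu>bar_def: "\<mu>bar = (\<lambda>i. dev_bound (p i) (\<theta>_lo i) (\<theta>_hi i) (\<theta>0 i))"
    and \<nu>bar_def: "\<nu>bar = (\<lambda>i. dev_bound (q i) (lam_lo i) (lam_hi i) (lam0 i))"
    and M_def: "M = (\<lambda>y. Dh y \<bullet> f y
                   + (\<Sum>j\<in>UNIV. min (Dh y $ j * fu_lo y $ j) (Dh y $ j * fu_hi y $ j)))"
    \<comment> \<open>(ii)\<close>
    and pos: "\<gamma> > 0" "\<epsilon>1 > 0" "\<epsilon>2 > 0" "\<And>i. \<gamma>\<theta> i > 0" "\<And>i. \<gamma>lam i > 0"
    and \<Psi>0_def: "\<Psi>0 = (\<lambda>y. M y + (\<Sum>i\<in>UNIV. hx2 i y * ip (p i) (\<theta>0 i) (\<phi> i y))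
                     - real CARD('n) * (\<epsilon>1 + \<epsilon>2)
                     + \<gamma> * (h y - (\<Sum>i\<in>UNIV. (\<mu>bar i)\<^sup>2 / (2 * \<gamma>\<theta> i)
                                           + (\<nu>bar i)\<^sup>2 / (2 * \<gamma>lam i))))"
    and \<Psi>1_def: "\<Psi>1 = (\<lambda>y i. (hx2 i y)\<^sup>2 * (g i y + ip (q i) (lam0 i) (\<psi> i y)))"
    and K_def: "K = (\<lambda>y. {w. \<Psi>0 y + (\<Sum>i\<in>UNIV. \<Psi>1 y i * w i) \<ge> 0})"
    and K_ne: "\<And>y. y \<in> C \<Longrightarrow> K y \<noteq> {}"
    \<comment> \<open>(iii) u0 Lipschitz with u0 x in K_BF(x)\<close>
    and u0_lip: "\<exists>L. L-lipschitz_on UNIV (\<lambda>y. vec_lambda (u0 y))"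
    and u0_K: "\<And>y. y \<in> C \<Longrightarrow> u0 y \<in> K y"
    \<comment> \<open>the controller s(u0), depending on state y and estimates mh, nh\<close>
    and s_def: "s = (\<lambda>y w mh nh i.
        let \<kappa>1 = (mh i)\<^sup>2 * (vnorm (p i) (\<phi> i y))\<^sup>2
                   / (mh i * vnorm (p i) (\<phi> i y) * \<bar>hx2 i y\<bar> + \<epsilon>1);
            \<kappa>2 = nh i * vnorm (q i) (\<psi> i y) * \<bar>hx2 i y\<bar>
        in w i + \<kappa>1 / b i + \<kappa>2\<^sup>2 * (w i)\<^sup>2 / (b i * (\<kappa>2 * \<bar>hx2 i y\<bar> * \<bar>w i\<bar> + \<epsilon>2)))"
    \<comment> \<open>true (uncertain) dynamics with input u\<close>
    and F_def: "F = (\<lambda>y u. f y + fu y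
        + emb e (\<lambda>i. ip (p i) (\<theta> i) (\<phi> i y)
                     + (g i y + ip (q i) (lam i) (\<psi> i y)) * u i))"
    \<comment> \<open>closed-loop trajectory on [0,\<infinity>) with u = h_x2^T \<odot> s(u0)\<close>
    and x_ode: "\<And>t. t \<ge> 0 \<Longrightarrow>
        (x has_vector_derivative
           F (x t) (\<lambda>i. hx2 i (x t) * s (x t) (u0 (x t)) (\<mu> t) (\<nu> t) i)) (at t within {0..})"
    and \<mu>_ode: "\<And>t i. t \<ge> 0 \<Longrightarrow>
        ((\<lambda>\<tau>. \<mu> \<tau> i) has_real_derivative
           (- \<gamma> * \<mu> t i + \<gamma>\<theta> i * \<bar>hx2 i (x t)\<bar> * vnorm (p i) (\<phi> i (x t)))) (at t within {0..})"
    and \<nu>_ode: "\<And>t i. t \<ge> 0 \<Longrightarrow>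
        ((\<lambda>\<tau>. \<nu> \<tau> i) has_real_derivative
           (- \<gamma> * \<nu> t i + \<gamma>lam i * (hx2 i (x t))\<^sup>2 * \<bar>u0 (x t) i\<bar> * vnorm (q i) (\<psi> i (x t))))
           (at t within {0..})"
    and init_pos: "\<And>i. \<mu> 0 i > 0" "\<And>i. \<nu> 0 i > 0"
    \<comment> \<open>(iv)\<close>
    and init_h: "h (x 0) \<ge> (\<Sum>i\<in>UNIV. ((\<mu> 0 i)\<^sup>2 + (\<mu>bar i)\<^sup>2) / (2 * \<gamma>\<theta> i)
                                  + ((\<nu> 0 i)\<^sup>2 + (\<nu>bar i)\<^sup>2) / (2 * \<gamma>lam i))"
  shows "\<forall>t>0. h (x t) \<ge> 0"
proof -
  define ms where "ms i = vnorm (p i) (\<lambda>j. \<theta> i j - \<theta>0 i j)" for i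
  define ns where "ns i = vnorm (q i) (\<lambda>j. lam i j - lam0 i j)" for i
  have ms: "0 \<le> ms i" "ms i \<le> \<mu>bar i" for i
    using vnorm_diff_le_dev_bound B\<theta> by (auto simp: ms_def \<mu>bar_def vnorm_nonneg)
  have ns: "0 \<le> ns i" "ns i \<le> \<nu>bar i" for i
    using vnorm_diff_le_dev_bound Blam by (auto simp: ns_def \<nu>bar_def vnorm_nonneg)
  have \<mu>_pos: "0 < \<mu> t i" if "0 \<le> t" for t i
    using \<mu>_ode[of _ i] _ init_pos(1) that
    by (rule positive_by_exp_decay) (use pos(4)[of i] in \<open>auto intro!: mult_nonneg_nonneg vnorm_nonneg\<close>)
  have \<nu>_pos: "0 < \<nu> t i" if "0 \<le> t" for t i
    using \<nu>_ode[of _ i] _ init_pos(2) that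
    by (rule positive_by_exp_decay) (use pos(5)[of i] in \<open>auto intro!: mult_nonneg_nonneg vnorm_nonneg\<close>)
  define u where "u t = (\<lambda>i. hx2 i (x t) * s (x t) (u0 (x t)) (\<mu> t) (\<nu> t) i)" for t
  define \<mu>' where "\<mu>' t i = - \<gamma> * \<mu> t i + \<gamma>\<theta> i * \<bar>hx2 i (x t)\<bar> * vnorm (p i) (\<phi> i (x t))" for t i
  define \<nu>' where "\<nu>' t i = - \<gamma> * \<nu> t i
    + \<gamma>lam i * (hx2 i (x t))\<^sup>2 * \<bar>u0 (x t) i\<bar> * vnorm (q i) (\<psi> i (x t))" for t i
  define W where "W t = (\<Sum>i\<in>UNIV. (\<mu> t i - ms i)\<^sup>2 / (2 * \<gamma>\<theta> i)
    + (\<nu> t i - ns i)\<^sup>2 / (2 * \<gamma>lam i))" for t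
  define W' where "W' t = (\<Sum>i\<in>UNIV. (\<mu> t i - ms i) / \<gamma>\<theta> i * \<mu>' t i
    + (\<nu> t i - ns i) / \<gamma>lam i * \<nu>' t i)" for t
  have h_x: "((\<lambda>t. h (x t)) has_real_derivative Dh (x t) \<bullet> F (x t) (u t)) (at t within {0..})"
    if "0 \<le> t" for t
    using h_deriv x_ode[OF that] unfolding u_def by (rule has_real_derivative_gradient_chain)
  have W: "(W has_real_derivative W' t) (at t within {0..})" if "0 \<le> t" for t
  proof -
    have "((\<lambda>t. (\<mu> t i - ms i)\<^sup>2 / (2 * \<gamma>\<theta> i) + (\<nu> t i - ns i)\<^sup>2 / (2 * \<gamma>lam i)) has_real_derivative
      (\<mu> t i - ms i) / \<gamma>\<theta> i * \<mu>' t i + (\<nu> t i - ns i) / \<gamma>lam i * \<nu>' t i) (at t within {0..})" for i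
      using pos(4,5)[of i] unfolding \<mu>'_def \<nu>'_def
      by (auto intro!: derivative_eq_intros \<mu>_ode[OF that] \<nu>_ode[OF that] simp: field_simps)
    then show ?thesis unfolding W_def[abs_def] W'_def by (intro DERIV_sum) auto
  qed
  have decay: "0 \<le> \<gamma> * (h (x t) - W t) + (Dh (x t) \<bullet> F (x t) (u t) - W' t)"
    if t: "0 \<le> t" and ht: "0 < h (x t)" for t
  proof -
    define y where "y = x t"
    have "y \<in> C" using ht by (simp add: C_def y_def)
    have "Dh y \<bullet> F y (u t) = (Dh y \<bullet> f y + Dh y \<bullet> fu y)
      + (\<Sum>i\<in>UNIV. hx2 i y * (ip (p i) (\<theta> i) (\<phi> i y) + (g i y + ip (q i) (lam i) (\<psi> i y))
          * (hx2 i y * robust_input (hx2 i y) (vnorm (p i) (\<phi> i y)) (vnorm (q i) (\<psi> i y))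
              (\<mu> t i) (\<nu> t i) (b i) \<epsilon>1 \<epsilon>2 (u0 y i))))" (is "_ = ?drift + ?input")
      by (simp add: F_def inner_add_right inner_emb[OF inj_e] hx2_def u_def s_def robust_input_def y_def)
    moreover have "0 \<le> \<gamma> * (h y - W t) + (?drift + ?input - W' t)"
      unfolding W_def W'_def \<mu>'_def \<nu>'_def y_def[symmetric]
    proof (rule lyapunov_decay_bound)
      show "M y \<le> Dh y \<bullet> f y + Dh y \<bullet> fu y"
        using sum_min_le_inner[OF A, of "Dh y" y] by (simp add: M_def inner_add_right)
      show "0 \<le> M y + (\<Sum>i\<in>UNIV. hx2 i y * ip (p i) (\<theta>0 i) (\<phi> i y)) - real CARD('n) * (\<epsilon>1 + \<epsilon>2)
        + \<gamma> * (h y - (\<Sum>i\<in>UNIV. (\<mu>bar i)\<^sup>2 / (2 * \<gamma>\<theta> i) + (\<nu>bar i)\<^sup>2 / (2 * \<gamma>lam i)))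
        + (\<Sum>i\<in>UNIV. (hx2 i y)\<^sup>2 * (g i y + ip (q i) (lam0 i) (\<psi> i y)) * u0 y i)"
        using u0_K[OF \<open>y \<in> C\<close>] by (simp add: K_def \<Psi>0_def \<Psi>1_def)
      show "\<bar>ip (p i) (\<theta> i) (\<phi> i y) - ip (p i) (\<theta>0 i) (\<phi> i y)\<bar> \<le> ms i * vnorm (p i) (\<phi> i y)" for i
        unfolding ms_def by (rule abs_ip_diff_le)
      show "\<bar>(g i y + ip (q i) (lam i) (\<psi> i y)) - (g i y + ip (q i) (lam0 i) (\<psi> i y))\<bar>
        \<le> ns i * vnorm (q i) (\<psi> i y)" for i
        unfolding ns_def using abs_ip_diff_le[of "q i" "lam i" "\<psi> i y" "lam0 i"] by simp
    qed (use ms ns pos b_pos AC[OF \<open>y \<in> C\<close>] \<mu>_pos[OF t] \<nu>_pos[OF t]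
      in \<open>auto simp: vnorm_nonneg less_imp_le\<close>)
    ultimately show ?thesis by (simp add: y_def)
  qed
  have margin: "0 < W t + exp (- \<gamma> * t) * (h (x 0) - W 0)" if "0 \<le> t" for t
    unfolding W_def using \<mu>_pos[OF that] init_pos ms ns pos(4,5) init_h
    by (intro adaptive_margin_pos) auto
  have V: "((\<lambda>t. h (x t) - W t) has_real_derivative Dh (x t) \<bullet> F (x t) (u t) - W' t) (at t within {0..})"
    if "0 \<le> t" for t
    using h_x[OF that] W[OF that] by (rule DERIV_diff)
  have "continuous_on {0..} (\<lambda>t. h (x t))"
    unfolding continuous_on_eq_continuous_within using h_x by (auto intro: DERIV_continuous)
  with V have "0 < h (x t)" if "0 \<le> t" for t
    using decay margin that by (rule positive_by_comparison)
  then show ?thesis by (auto intro: less_imp_le)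
qed

end
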